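(* Let $N=\{1,\dots,n\}$ with $n\ge 2$ and let $\mathcal{D}=\mathbb{R}^n_+$ be the domain of profiles of inflows. A rule $R:\mathcal{D}\to\mathbb{R}^n_+$ satisfies scale invariance, downstream impartiality, upstream invariance, and balance if and only if it is the Shapley rule, i.e. for each $e\in\mathcal{D}$ and each $i\in N$, $$R_i(e)=\sum_{j\le i}\frac{e_j}{n-j+1}.$$
   Context: Agents $1,\dots,n$ are located along a linear river, lower index meaning more upstream; agent $i$ has river inflow $e_i\ge 0$, and $e=(e_1,\dots,e_n)\in\mathcal{D}=\mathbb{R}^n_+$. An allocation for $e$ is $x\in\mathbb{R}^n_+$ with $\sum_{i=1}^n x_i=\sum_{i=1}^n e_i$ and $\sum_{i=1}^k x_i\le\sum_{i=1}^k e_i$ for each $k=1,\dots,n-1$. A rule is a map $R:\mathcal{D}\to\mathbb{R}^n_+$ assigning to each $e$ an allocation $R(e)$ for $e$. Axioms: Scale invariance: for each $e\in\mathcal{D}$ and each $\gamma\in\mathbb{R}_+$, $R(\gamma e)=\gamma R(e)$. Upstream invariance: for each $e,e'\in\mathcal{D}$ such that $e_i<e'_i$ for some $i\in N$ and $e_j=e'_j$ for all $j\ne i$, we have $R_k(e)=R_k(e')$ for each $k<i$. Downstream impartiality: for each $e,e'\in\mathcal{D}$ such that $e_i<e'_i$ for some $i\in N$ and $e_j=e'_j$ for all $j\ne i$, and for each $k,l>i$ with $e_k=e_l$, we have $R_k(e')-R_k(e)=R_l(e')-R_l(e)$. Balance: for each $e\in\mathcal{D}$ such that $e_i>0$ for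 some $i\in\{1,\dots,n-1\}$ and $e_j=0$ for all $j\ne i$, $R_i(e)=\frac{1}{n-i}\sum_{k>i}R_k(e)$. *)

theory Defs
  imports Main "HOL.Real"
begin

text \<open>A profile of inflows is a function nat => real that is
nonnegative on {1..n} and zero outside {1..n} (the values outside are irrelevant
junk, fixed to 0 so profiles correspond one-to-one to points of R^n_+).\<close>

definition profile :: "nat \<Rightarrow> (nat \<Rightarrow> real) \<Rightarrow> bool" where
  "profile n e \<longleftrightarrow> (\<forall>i\<in>{1..n}. 0 \<le> e i) \<and> (\<forall>i. i \<notin> {1..n} \<longrightarrow> e i = 0)"

definition allocation :: "nat \<Rightarrow> (nat \<Rightarrow> real) \<Rightarrow> (nat \<Rightarrow> real) \<Rightarrow> bool" where
  "allocation n e x \<longleftrightarrow> (\<forall>i\<in>{1..n}. 0 \<le> x i)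
     \<and> (\<Sum>i=1..n. x i) = (\<Sum>i=1..n. e i)
     \<and> (\<forall>k\<in>{1..n-1}. (\<Sum>i=1..k. x i) \<le> (\<Sum>i=1..k. e i))"

definition is_rule :: "nat \<Rightarrow> ((nat \<Rightarrow> real) \<Rightarrow> (nat \<Rightarrow> real)) \<Rightarrow> bool" where
  "is_rule n R \<longleftrightarrow> (\<forall>e. profile n e \<longrightarrow> allocation n e (R e))"

definition scale_invariance :: "nat \<Rightarrow> ((nat \<Rightarrow> real) \<Rightarrow> (nat \<Rightarrow> real)) \<Rightarrow> bool" where
  "scale_invariance n R \<longleftrightarrow> (\<forall>e \<gamma>. profile n e \<longrightarrow> 0 \<le> \<gamma> \<longrightarrow>
     (\<forall>i\<in>{1..n}. R (\<lambda>j. \<gamma> * e j) i = \<gamma> * R e i))"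

definition upstream_invariance :: "nat \<Rightarrow> ((nat \<Rightarrow> real) \<Rightarrow> (nat \<Rightarrow> real)) \<Rightarrow> bool" where
  "upstream_invariance n R \<longleftrightarrow> (\<forall>e e' i. profile n e \<longrightarrow> profile n e' \<longrightarrow> i \<in> {1..n} \<longrightarrow>
     e i < e' i \<longrightarrow> (\<forall>j\<in>{1..n}. j \<noteq> i \<longrightarrow> e j = e' j) \<longrightarrow>
     (\<forall>k\<in>{1..n}. k < i \<longrightarrow> R e k = R e' k))"

definition downstream_impartiality :: "nat \<Rightarrow> ((nat \<Rightarrow> real) \<Rightarrow> (nat \<Rightarrow> real)) \<Rightarrow> bool" where
  "downstream_impartiality n R \<longleftrightarrow> (\<forall>e e' i. profile n e \<longrightarrow> profile n e' \<longrightarrow> i \<in> {1..n} \<longrightarrow>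
     e i < e' i \<longrightarrow> (\<forall>j\<in>{1..n}. j \<noteq> i \<longrightarrow> e j = e' j) \<longrightarrow>
     (\<forall>k\<in>{1..n}. \<forall>l\<in>{1..n}. i < k \<longrightarrow> i < l \<longrightarrow> e k = e l \<longrightarrow>
        R e' k - R e k = R e' l - R e l))"

definition balance :: "nat \<Rightarrow> ((nat \<Rightarrow> real) \<Rightarrow> (nat \<Rightarrow> real)) \<Rightarrow> bool" where
  "balance n R \<longleftrightarrow> (\<forall>e i. profile n e \<longrightarrow> i \<in> {1..n-1} \<longrightarrow> 0 < e i \<longrightarrow>
     (\<forall>j\<in>{1..n}. j \<noteq> i \<longrightarrow> e j = 0) \<longrightarrow>
     R e i = (1 / real (n - i)) * (\<Sum>k\<in>{i<..n}. R e k))"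

definition shapley_rule :: "nat \<Rightarrow> (nat \<Rightarrow> real) \<Rightarrow> nat \<Rightarrow> real" where
  "shapley_rule n e i = (\<Sum>j=1..i. e j / (real n - real j + 1))"

end

theory Submission
  imports Defs
begin

text \<open>
  By strong induction on the agent \<open>i\<close>. Given a profile \<open>e\<close> with \<open>c = e i\<close>, compare the
  profile \<open>q\<close> (equal to \<open>e\<close> upstream of \<open>i\<close> and to \<open>c\<close> from \<open>i\<close> on) with \<open>r\<close> (zero upstream
  of \<open>i\<close>, \<open>c\<close> from \<open>i\<close> on). Upstream invariance gives \<open>R e i = R q i\<close> and
  \<open>R r i = R s i\<close> for the single inflow \<open>s = c\<close> at \<open>i\<close>, which balance, downstream
  impartiality against the zero profile and the budget identity evaluate to \<open>c / (n - i + 1)\<close>.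
  Downstream impartiality, applied to one upstream coordinate at a time, makes \<open>R q - R r\<close> a
  constant \<open>D\<close> on the agents \<open>i..n\<close>; summing \<open>R q - R r\<close> over all agents with the
  induction hypothesis upstream yields \<open>(n - i + 1) D = (n - i + 1) shapley_rule n e (i - 1)\<close>,
  so \<open>R e i = shapley_rule n e (i - 1) + c / (n - i + 1) = shapley_rule n e i\<close>.
\<close>

lemma profile_outside:
  assumes "profile n e" "j \<notin> {1..n}"
  shows "e j = 0"
  using assms unfolding profile_def by blast

text \<open>Hybrid argument: pass from \<open>e\<close> to \<open>e'\<close> one coordinate at a time.\<close>

lemma profile_hybrid_invariance:
  assumes step: "\<And>x y j. profile n x \<Longrightarrow> profile n y \<Longrightarrow> j \<in> J \<Longrightarrow>
      (\<forall>m. m \<notin> J \<longrightarrow> x m = e m) \<Longrightarrow> (\<forall>m. m \<noteq> j \<longrightarrow> x m = y m) \<Longrightarrow> g x = g y"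
    and e: "profile n e" and e': "profile n e'" and agree: "\<forall>m. m \<notin> J \<longrightarrow> e m = e' m"
  shows "g e = g e'"
proof -
  define h where "h t = (\<lambda>m. if m < t then e' m else e m)" for t
  have h_profile: "profile n (h t)" for t
    using e e' unfolding profile_def h_def by auto
  have h_agree: "\<forall>m. m \<notin> J \<longrightarrow> h t m = e m" for t
    using agree unfolding h_def by auto
  have "g (h t) = g e" for t
  proof (induction t)
    case 0
    then show ?case by (simp add: h_def)
  next
    case (Suc t)
    have "g (h t) = g (h (Suc t))"
    proof (cases "t \<in> J")
      case True
      then show ?thesis
        by (intro step h_profile h_agree) (auto simp: h_def)
    next
      case False
      then have "h t = h (Suc t)" using agree by (intro ext) (auto simp: h_def less_Suc_eq)
      then show ?thesis by simp
    qed
    then show ?case using Suc.IH by simp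
  qed
  moreover have "h (Suc n) = e'"
    using e e' by (auto simp: h_def profile_def)
  ultimately show ?thesis by metis
qed

lemma downstream_impartiality_step:
  assumes DI: "downstream_impartiality n R" and x: "profile n x" and y: "profile n y"
    and agree: "\<forall>m. m \<noteq> j \<longrightarrow> x m = y m"
    and k: "k \<in> {1..n}" and l: "l \<in> {1..n}" and jk: "j < k" and jl: "j < l" and "x k = x l"
  shows "R y k - R x k = R y l - R x l"
proof -
  note DI' = DI[unfolded downstream_impartiality_def, rule_format]
  consider "x j < y j" | "y j < x j" | "x = y"
    using agree by (metis ext linorder_neqE_linordered_idom)
  then show ?thesis
  proof cases
    case 1
    then have "j \<in> {1..n}" by (metis less_irrefl profile_outside x y)
    from DI'[OF x y this 1 _ k l jk jl] show ?thesis using agree \<open>x k = x l\<close> by simp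
  next
    case 2
    then have "j \<in> {1..n}" by (metis less_irrefl profile_outside x y)
    moreover have "y k = y l" using agree jk jl \<open>x k = x l\<close> by simp
    ultimately have "R x k - R y k = R x l - R y l"
      using DI'[OF y x _ 2 _ k l jk jl] agree by simp
    then show ?thesis by linarith
  qed simp
qed

lemma downstream_impartiality_upstream_change:
  assumes DI: "downstream_impartiality n R" and e: "profile n e" and e': "profile n e'"
    and agree: "\<forall>m\<ge>t. e m = e' m"
    and k: "k \<in> {1..n}" and l: "l \<in> {1..n}" and tk: "t \<le> k" and tl: "t \<le> l" and "e k = e l"
  shows "R e' k - R e k = R e' l - R e l"
proof -
  have "(\<lambda>x. R x k - R x l) e = (\<lambda>x. R x k - R x l) e'"
  proof (rule profile_hybrid_invariance[where J = "{..<t}", OF _ e e'])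
    fix x y j
    assume x: "profile n x" and y: "profile n y" and j: "j \<in> {..<t}"
      and x_above: "\<forall>m. m \<notin> {..<t} \<longrightarrow> x m = e m" and xy: "\<forall>m. m \<noteq> j \<longrightarrow> x m = y m"
    have "x k = x l" using x_above tk tl \<open>e k = e l\<close> by simp
    moreover have "j < k" "j < l" using j tk tl by auto
    ultimately have "R y k - R x k = R y l - R x l"
      using downstream_impartiality_step[OF DI x y xy k l] by blast
    then show "R x k - R x l = R y k - R y l" by linarith
  next
    show "\<forall>m. m \<notin> {..<t} \<longrightarrow> e m = e' m" using agree by simp
  qed
  then show ?thesis by simp
qed

lemma upstream_invariance_step:
  assumes UI: "upstream_invariance n R" and x: "profile n x" and y: "profile n y"
    and agree: "\<forall>m. m \<noteq> j \<longrightarrow> x m = y m" and k: "k \<in> {1..n}" and kj: "k < j"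
  shows "R x k = R y k"
proof -
  note UI' = UI[unfolded upstream_invariance_def, rule_format]
  consider "x j < y j" | "y j < x j" | "x = y"
    using agree by (metis ext linorder_neqE_linordered_idom)
  then show ?thesis
  proof cases
    case 1
    then have "j \<in> {1..n}" by (metis less_irrefl profile_outside x y)
    from UI'[OF x y this 1 _ k kj] show ?thesis using agree by simp
  next
    case 2
    then have "j \<in> {1..n}" by (metis less_irrefl profile_outside x y)
    from UI'[OF y x this 2 _ k kj] show ?thesis using agree by simp
  qed simp
qed

lemma upstream_invariance_downstream_change:
  assumes UI: "upstream_invariance n R" and e: "profile n e" and e': "profile n e'"
    and agree: "\<forall>m\<le>k. e m = e' m" and k: "k \<in> {1..n}"
  shows "R e k = R e' k"
proof (rule profile_hybrid_invariance[where J = "{k<..}", OF _ e e'])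
  fix x y j
  assume x: "profile n x" and y: "profile n y" and "j \<in> {k<..}"
    and xy: "\<forall>m. m \<noteq> j \<longrightarrow> x m = y m"
  then show "R x k = R y k" using upstream_invariance_step[OF UI x y xy k] by simp
next
  show "\<forall>m. m \<notin> {k<..} \<longrightarrow> e m = e' m" using agree by simp
qed

lemma rule_nonneg:
  assumes "is_rule n R" "profile n e" "i \<in> {1..n}"
  shows "0 \<le> R e i"
  using assms unfolding is_rule_def allocation_def by blast

lemma rule_sum_eq:
  assumes "is_rule n R" "profile n e"
  shows "(\<Sum>i=1..n. R e i) = (\<Sum>i=1..n. e i)"
  using assms unfolding is_rule_def allocation_def by blast

lemma rule_prefix_sum_le:
  assumes rule: "is_rule n R" and e: "profile n e" and "k \<le> n"
  shows "(\<Sum>i=1..k. R e i) \<le> (\<Sum>i=1..k. e i)"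
proof (cases "k = 0 \<or> k = n")
  case True
  then show ?thesis using rule_sum_eq[OF rule e] by auto
next
  case False
  then have "k \<in> {1..n-1}" using \<open>k \<le> n\<close> by auto
  then show ?thesis using rule e unfolding is_rule_def allocation_def by blast
qed

lemma rule_vanishes_on_dry_prefix:
  assumes rule: "is_rule n R" and e: "profile n e" and "k \<le> n"
    and dry: "\<forall>j\<in>{1..k}. e j = 0" and j: "j \<in> {1..k}"
  shows "R e j = 0"
proof -
  have nonneg: "\<forall>i\<in>{1..k}. 0 \<le> R e i" using rule_nonneg[OF rule e] \<open>k \<le> n\<close> by auto
  have "(\<Sum>i=1..k. R e i) \<le> 0"
    using rule_prefix_sum_le[OF rule e \<open>k \<le> n\<close>] dry by simp
  moreover have "0 \<le> (\<Sum>i=1..k. R e i)" using nonneg by (intro sum_nonneg) blast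
  ultimately have "(\<Sum>i=1..k. R e i) = 0" by linarith
  with nonneg j show ?thesis using sum_nonneg_eq_0_iff[of "{1..k}" "R e"] by simp
qed

lemma sum_split_at:
  fixes f :: "nat \<Rightarrow> 'a::comm_monoid_add"
  assumes "p \<le> n"
  shows "(\<Sum>j=1..n. f j) = (\<Sum>j=1..p. f j) + (\<Sum>j=Suc p..n. f j)"
  using assms sum.ub_add_nat[of 1 p f "n - p"] by simp

lemma rule_single_inflow:
  assumes rule: "is_rule n R" and DI: "downstream_impartiality n R" and B: "balance n R"
    and i: "i \<in> {1..n}" and "0 \<le> c" and k: "k \<in> {i..n}"
  shows "R (\<lambda>j. if j = i then c else 0) k = c / (real n - real i + 1)"
proof -
  define s where "s = (\<lambda>j. if j = i then c else (0::real))"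
  have s: "profile n s" using i \<open>0 \<le> c\<close> unfolding profile_def s_def by auto
  have zero: "profile n (\<lambda>_. 0)" unfolding profile_def by simp
  have R_zero: "R (\<lambda>_. 0) j = 0" if "j \<in> {1..n}" for j
    by (rule rule_vanishes_on_dry_prefix[OF rule zero order_refl]) (use that in auto)
  have "R s k = c / (real n - real i + 1)"
  proof (cases "c = 0")
    case True
    then have "s = (\<lambda>_. 0)" by (auto simp: s_def)
    then show ?thesis using R_zero i k True by simp
  next
    case False
    have above: "R s m = R s n" if "m \<in> {i<..n}" for m
    proof -
      have "R s m - R (\<lambda>_. 0) m = R s n - R (\<lambda>_. 0) n"
        by (rule downstream_impartiality_step[OF DI zero s, of i]) (use that in \<open>auto simp: s_def\<close>)
      then show ?thesis using R_zero that by simp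
    qed
    have flat: "R s m = R s n" if m: "m \<in> {i..n}" for m
    proof -
      consider "m = i" "i < n" | "m = n" | "m \<in> {i<..n}" using m by fastforce
      then show ?thesis
      proof cases
        case 1
        have "i \<in> {1..n-1}" "0 < s i" "\<forall>j\<in>{1..n}. j \<noteq> i \<longrightarrow> s j = 0"
          using i 1 \<open>0 \<le> c\<close> \<open>c \<noteq> 0\<close> by (auto simp: s_def)
        then have "R s i = 1 / real (n - i) * (\<Sum>m\<in>{i<..n}. R s m)"
          using B s unfolding balance_def by blast
        also have "(\<Sum>m\<in>{i<..n}. R s m) = (\<Sum>m\<in>{i<..n}. R s n)"
          using above by (rule sum.cong[OF refl])
        also have "1 / real (n - i) * \<dots> = R s n" using 1 by simp
        finally show ?thesis using 1 by simp
      next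
        case 3
        then show ?thesis by (rule above)
      qed simp
    qed
    have below: "R s j = 0" if "j \<in> {1..i - 1}" for j
      by (rule rule_vanishes_on_dry_prefix[OF rule s _ _ that]) (use i in \<open>auto simp: s_def\<close>)
    have "c = (\<Sum>j=1..n. s j)" using i by (simp add: s_def)
    also have "\<dots> = (\<Sum>j=1..n. R s j)" using rule_sum_eq[OF rule s] by simp
    also have "\<dots> = (\<Sum>j=1..i - 1. R s j) + (\<Sum>j=i..n. R s j)"
      using sum_split_at[of "i - 1" n "R s"] i by auto
    also have "(\<Sum>j=i..n. R s j) = (\<Sum>j=i..n. R s n)"
      by (rule sum.cong[OF refl]) (rule flat)
    also have "(\<Sum>j=1..i - 1. R s j) = 0"
      using below by simp
    also have "0 + (\<Sum>j=i..n. R s n) = (real n - real i + 1) * R s n"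
      using i by (simp add: of_nat_diff)
    finally show ?thesis using flat[OF k] i by (simp add: field_simps)
  qed
  then show ?thesis unfolding s_def .
qed

lemma shapley_rule_cong:
  assumes "\<forall>j\<in>{1..k}. e j = e' j"
  shows "shapley_rule n e k = shapley_rule n e' k"
  unfolding shapley_rule_def using assms by simp

lemma shapley_rule_Suc:
  "shapley_rule n e (Suc k) = shapley_rule n e k + e (Suc k) / (real n - real k)"
  unfolding shapley_rule_def by simp

lemma shapley_rule_surplus:
  assumes "k \<le> n"
  shows "(\<Sum>j=1..k. e j) - (\<Sum>j=1..k. shapley_rule n e j) = (real n - real k) * shapley_rule n e k"
  using assms
proof (induction k)
  case 0
  then show ?case by (simp add: shapley_rule_def)
next
  case (Suc k)
  have "real n - real k \<noteq> 0" using Suc.prems by simp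
  then have "(real n - real k) * shapley_rule n e (Suc k) = (real n - real k) * shapley_rule n e k + e (Suc k)"
    by (simp add: shapley_rule_Suc distrib_left)
  with Suc show ?case by (simp add: algebra_simps)
qed

lemma shapley_rule_single_change:
  assumes agree: "\<forall>j\<in>{1..k}. j \<noteq> i \<longrightarrow> e j = e' j" and i: "i \<in> {1..k}"
  shows "shapley_rule n e' k - shapley_rule n e k = (e' i - e i) / (real n - real i + 1)"
proof -
  have "shapley_rule n e' k - shapley_rule n e k
      = (\<Sum>j=1..k. if j = i then (e' i - e i) / (real n - real i + 1) else 0)"
    unfolding shapley_rule_def sum_subtractf[symmetric]
    by (rule sum.cong) (auto simp: agree diff_divide_distrib)
  also have "\<dots> = (e' i - e i) / (real n - real i + 1)" using i by simp
  finally show ?thesis .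
qed

lemma rule_eq_shapley_rule:
  assumes rule: "is_rule n R" and DI: "downstream_impartiality n R"
    and UI: "upstream_invariance n R" and B: "balance n R"
  shows "profile n e \<Longrightarrow> i \<in> {1..n} \<Longrightarrow> R e i = shapley_rule n e i"
proof (induction i arbitrary: e rule: less_induct)
  case (less i)
  note e = less.prems(1) and i = less.prems(2)
  obtain p where i_Suc: "i = Suc p" and "p < n" using i by (cases i) auto
  define c where "c = e i"
  define q where "q j = (if j < i then e j else if j \<le> n then c else 0)" for j
  define r where "r j = (if i \<le> j \<and> j \<le> n then c else 0)" for j
  define s where "s j = (if j = i then c else 0)" for j
  have "0 \<le> c" using e i unfolding profile_def c_def by blast
  then have q: "profile n q" and r: "profile n r" and s: "profile n s"
    using e i unfolding profile_def q_def r_def s_def by auto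
  have R_e: "R e i = R q i"
    by (rule upstream_invariance_downstream_change[OF UI e q _ i]) (use i in \<open>simp add: q_def c_def\<close>)
  have R_r: "R r i = c / (real n - real p)"
  proof -
    have "R r i = R s i"
      by (rule upstream_invariance_downstream_change[OF UI r s _ i]) (use i in \<open>auto simp: r_def s_def\<close>)
    also have "\<dots> = c / (real n - real i + 1)"
      unfolding s_def using rule_single_inflow[OF rule DI B i \<open>0 \<le> c\<close>] i by simp
    finally show ?thesis using i_Suc by simp
  qed
  define D where "D = R q i - R r i"
  have downstream: "R q k - R r k = D" if "k \<in> {i..n}" for k
    unfolding D_def using that i
    by (intro downstream_impartiality_upstream_change[OF DI r q, of i]) (auto simp: q_def r_def)
  have upstream: "R q j - R r j = shapley_rule n e j" if "j \<in> {1..p}" for j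
  proof -
    have "R q j = shapley_rule n q j" using less.IH[OF _ q] that i_Suc \<open>p < n\<close> by simp
    also have "\<dots> = shapley_rule n e j" by (rule shapley_rule_cong) (use that i_Suc in \<open>simp add: q_def\<close>)
    moreover have "R r j = 0"
      by (rule rule_vanishes_on_dry_prefix[OF rule r _ _ that]) (use \<open>p < n\<close> i_Suc in \<open>auto simp: r_def\<close>)
    ultimately show ?thesis by simp
  qed
  have "(\<Sum>j=1..p. e j) = (\<Sum>j=1..n. q j - r j)"
    using sum_split_at[of p n "\<lambda>j. q j - r j"] \<open>p < n\<close> i_Suc by (simp add: q_def r_def)
  also have "\<dots> = (\<Sum>j=1..n. R q j - R r j)"
    using rule_sum_eq[OF rule q] rule_sum_eq[OF rule r] by (simp add: sum_subtractf)
  also have "\<dots> = (\<Sum>j=1..p. shapley_rule n e j) + (real n - real p) * D"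
    using sum_split_at[of p n "\<lambda>j. R q j - R r j"] \<open>p < n\<close> upstream downstream i_Suc
    by (simp add: of_nat_diff)
  finally have "(real n - real p) * D = (real n - real p) * shapley_rule n e p"
    using shapley_rule_surplus[of p n e] \<open>p < n\<close> by simp
  then have "D = shapley_rule n e p" using \<open>p < n\<close> by simp
  then show ?case using R_e R_r i_Suc unfolding D_def c_def by (simp add: shapley_rule_Suc)
qed

lemma scale_invariance_shapley_rule:
  assumes shapley: "\<forall>e. profile n e \<longrightarrow> (\<forall>i\<in>{1..n}. R e i = shapley_rule n e i)"
  shows "scale_invariance n R"
  unfolding scale_invariance_def
proof (intro allI impI ballI)
  fix e and \<gamma> :: real and i
  assume e: "profile n e" and "0 \<le> \<gamma>" and i: "i \<in> {1..n}"
  then have "profile n (\<lambda>j. \<gamma> * e j)" unfolding profile_def by auto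
  then show "R (\<lambda>j. \<gamma> * e j) i = \<gamma> * R e i"
    using shapley e i by (simp add: shapley_rule_def sum_distrib_left)
qed

lemma downstream_impartiality_shapley_rule:
  assumes shapley: "\<forall>e. profile n e \<longrightarrow> (\<forall>i\<in>{1..n}. R e i = shapley_rule n e i)"
  shows "downstream_impartiality n R"
  unfolding downstream_impartiality_def
proof (intro allI impI ballI)
  fix e e' i k l
  assume e: "profile n e" and e': "profile n e'" and i: "i \<in> {1..n}"
    and agree: "\<forall>j\<in>{1..n}. j \<noteq> i \<longrightarrow> e j = e' j" and k: "k \<in> {1..n}" and l: "l \<in> {1..n}"
    and "i < k" "i < l"
  then have "shapley_rule n e' m - shapley_rule n e m = (e' i - e i) / (real n - real i + 1)"
    if "m \<in> {i<..n}" for m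
    using that by (intro shapley_rule_single_change) auto
  then show "R e' k - R e k = R e' l - R e l"
    using shapley e e' k l \<open>i < k\<close> \<open>i < l\<close> by simp
qed

lemma upstream_invariance_shapley_rule:
  assumes shapley: "\<forall>e. profile n e \<longrightarrow> (\<forall>i\<in>{1..n}. R e i = shapley_rule n e i)"
  shows "upstream_invariance n R"
  unfolding upstream_invariance_def
proof (intro allI impI ballI)
  fix e e' i k
  assume e: "profile n e" and e': "profile n e'"
    and agree: "\<forall>j\<in>{1..n}. j \<noteq> i \<longrightarrow> e j = e' j" and k: "k \<in> {1..n}" and "k < i"
  then have "shapley_rule n e k = shapley_rule n e' k"
    by (intro shapley_rule_cong) auto
  then show "R e k = R e' k" using shapley e e' k by simp
qed

lemma balance_shapley_rule:
  assumes shapley: "\<forall>e. profile n e \<longrightarrow> (\<forall>i\<in>{1..n}. R e i = shapley_rule n e i)"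
  shows "balance n R"
  unfolding balance_def
proof (intro allI impI)
  fix e i
  assume e: "profile n e" and i: "i \<in> {1..n-1}" and single: "\<forall>j\<in>{1..n}. j \<noteq> i \<longrightarrow> e j = 0"
  define x where "x = e i / (real n - real i + 1)"
  have R_e: "R e m = x" if "m \<in> {i..n}" for m
  proof -
    have "shapley_rule n e m - shapley_rule n (\<lambda>_. 0) m = x"
      unfolding x_def using shapley_rule_single_change[of m i "\<lambda>_. 0" e n] that i single by auto
    then show ?thesis using shapley e that i by (simp add: shapley_rule_def)
  qed
  have "(\<Sum>k\<in>{i<..n}. R e k) = real (n - i) * x"
    using R_e by simp
  moreover have "i < n" using i by auto
  ultimately show "R e i = 1 / real (n - i) * (\<Sum>k\<in>{i<..n}. R e k)"
    using R_e[of i] by simp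
qed

theorem theorem1:
  fixes n :: nat and R :: "(nat \<Rightarrow> real) \<Rightarrow> (nat \<Rightarrow> real)"
  assumes "2 \<le> n" and "is_rule n R"
  shows "(scale_invariance n R \<and> downstream_impartiality n R \<and> upstream_invariance n R \<and> balance n R)
    \<longleftrightarrow> (\<forall>e. profile n e \<longrightarrow> (\<forall>i\<in>{1..n}. R e i = shapley_rule n e i))"
  using rule_eq_shapley_rule[OF assms(2)] scale_invariance_shapley_rule
    downstream_impartiality_shapley_rule upstream_invariance_shapley_rule balance_shapley_rule
  by blast

end
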